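(* Let $p,q$ be integers with $2\le q<p$, and let $\tau:\Sigma_q^\ast\to\{-1,0,\ldots,p-2\}$ be a regular mapping. Then for every $m\in\mathbb Z$ and every $k\in\mathbb N$, \[ \#\big(\Lambda(\tau)\cap[m,m+p^k)\big)\le q^k. \]
   Context: Let $\Sigma_q=\{0,1,\ldots,q-1\}$, $\Sigma_q^n$ the words of length $n$, and $\Sigma_q^\ast=\bigcup_{n\ge1}\Sigma_q^n$. A map $\tau:\Sigma_q^\ast\to\{-1,0,\ldots,p-2\}$ is a regular mapping if (i) $\tau(0^n)=0$ for all $n\ge1$; (ii) $\tau(i_1\cdots i_n)\in i_n+q\mathbb Z$ for every word $i_1\cdots i_n$; (iii) for every $I\in\Sigma_q^\ast$, $\tau(I0^l)=0$ for all sufficiently large $l$. For $I=i_1\cdots i_n\in\Sigma_q^\ast$ and $k\ge1$, let $I_{1,k}=i_1\cdots i_k$ if $k\le n$ and $I_{1,k}=i_1\cdots i_n0^{k-n}$ if $k>n$. Set $\tau^\ast(I)=\sum_{k=1}^\infty \tau(I_{1,k})p^{k-1}$ (a finite sum by (iii)), and $\Lambda(\tau)=\{\tau^\ast(I): I\in\Sigma_q^\ast\}$. *)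

theory Defs
  imports Main
begin

definition words :: "nat \<Rightarrow> nat list set" where
  "words q = {I. I \<noteq> [] \<and> (\<forall>i\<in>set I. i < q)}"

definition regular_mapping :: "nat \<Rightarrow> nat \<Rightarrow> (nat list \<Rightarrow> int) \<Rightarrow> bool" where
  "regular_mapping p q \<tau> \<longleftrightarrow>
     (\<forall>I\<in>words q. \<tau> I \<in> {-1 .. int p - 2}) \<and>
     (\<forall>n\<ge>1. \<tau> (replicate n 0) = 0) \<and>
     (\<forall>I\<in>words q. \<tau> I mod int q = int (last I) mod int q) \<and>
     (\<forall>I\<in>words q. \<exists>L. \<forall>l\<ge>L. \<tau> (I @ replicate l 0) = 0)"

definition pref :: "nat list \<Rightarrow> nat \<Rightarrow> nat list" where
  "pref I k = (if k \<le> length I then take k I else I @ replicate (k - length I) 0)"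

text \<open>\<tau>*(I) = \<Sum>_{k\<ge>1} \<tau>(I_{1,k}) p^{k-1}; the sum runs over the (finite, for regular \<tau>)
  set of indices with nonzero term.\<close>
definition tau_star :: "nat \<Rightarrow> (nat list \<Rightarrow> int) \<Rightarrow> nat list \<Rightarrow> int" where
  "tau_star p \<tau> I = (\<Sum>k\<in>{k. 1 \<le> k \<and> \<tau> (pref I k) \<noteq> 0}. \<tau> (pref I k) * int p ^ (k - 1))"

definition Lambda :: "nat \<Rightarrow> nat \<Rightarrow> (nat list \<Rightarrow> int) \<Rightarrow> int set" where
  "Lambda p q \<tau> = tau_star p \<tau> ` words q"

end

theory Submission
  imports Defs
begin

text \<open>Modulo \<open>p^k\<close>, \<open>\<tau>*(I)\<close> only depends on the length-\<open>k\<close> prefix \<open>I\<^sub>1\<^sub>,\<^sub>k\<close>, which ranges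
  over the \<open>q^k\<close> words of length \<open>k\<close>; distinct points of a half-open interval of length
  \<open>p^k\<close> have distinct residues modulo \<open>p^k\<close>, so such an interval meets \<open>\<Lambda>(\<tau>)\<close> in at most
  \<open>q^k\<close> points.\<close>

definition prefix_value :: "nat \<Rightarrow> (nat list \<Rightarrow> int) \<Rightarrow> nat list \<Rightarrow> int" where
  "prefix_value p \<tau> J = (\<Sum>j = 1..length J. \<tau> (take j J) * int p ^ (j - 1))"

lemma length_pref [simp]: "length (pref I k) = k"
  unfolding pref_def by auto

lemma take_pref: "j \<le> k \<Longrightarrow> take j (pref I k) = pref I j"
  unfolding pref_def by (auto simp: take_append min_def)

lemma set_pref_subset: "I \<in> words q \<Longrightarrow> 0 < q \<Longrightarrow> set (pref I k) \<subseteq> {..<q}"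
  unfolding pref_def words_def by (auto dest: in_set_takeD)

lemma finite_nonzero_pref:
  assumes "\<forall>l\<ge>L. \<tau> (I @ replicate l 0) = 0"
  shows "finite {j. 1 \<le> j \<and> \<tau> (pref I j) \<noteq> 0}"
proof (rule finite_subset)
  show "{j. 1 \<le> j \<and> \<tau> (pref I j) \<noteq> 0} \<subseteq> {..length I + L}"
  proof (rule subsetI, rule ccontr)
    fix j assume "j \<in> {j. 1 \<le> j \<and> \<tau> (pref I j) \<noteq> 0}" "j \<notin> {..length I + L}"
    then show False
      using assms[rule_format, of "j - length I"] by (simp add: pref_def)
  qed
qed simp

lemma tau_star_mod_power:
  assumes fin: "finite {j. 1 \<le> j \<and> \<tau> (pref I j) \<noteq> 0}"
  shows "tau_star p \<tau> I mod int p ^ k = prefix_value p \<tau> (pref I k) mod int p ^ k"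
proof -
  define S where "S = {j. 1 \<le> j \<and> \<tau> (pref I j) \<noteq> 0}"
  define f where "f j = \<tau> (pref I j) * int p ^ (j - 1)" for j
  have "tau_star p \<tau> I = sum f (S \<inter> {..k}) + sum f (S - {..k})"
    unfolding tau_star_def S_def[symmetric] f_def[symmetric]
    using fin by (simp add: S_def sum.Int_Diff)
  moreover have "sum f (S \<inter> {..k}) = prefix_value p \<tau> (pref I k)"
  proof -
    have "sum f (S \<inter> {..k}) = sum f {1..k}"
      by (rule sum.mono_neutral_left) (auto simp: S_def f_def)
    then show ?thesis
      unfolding prefix_value_def f_def by (simp add: take_pref)
  qed
  moreover have "int p ^ k dvd sum f (S - {..k})"
    by (rule dvd_sum) (auto simp: f_def le_imp_power_dvd)
  ultimately show ?thesis
    by (simp add: mod_add_right_eq[symmetric])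
qed

lemma inj_on_mod_interval:
  fixes m P :: int
  shows "inj_on (\<lambda>x. x mod P) {m..<m + P}"
proof (rule inj_onI)
  fix x y assume "x \<in> {m..<m + P}" "y \<in> {m..<m + P}" "x mod P = y mod P"
  then have "\<bar>x - y\<bar> < P" and "P dvd x - y"
    by (auto simp: mod_eq_dvd_iff)
  then show "x = y"
    using dvd_imp_le_int[of "x - y" P] by (cases "x = y") auto
qed

lemma card_interval_le_by_residues:
  fixes A :: "int set" and g :: "'a \<Rightarrow> int"
  assumes "finite W" and "\<And>x. x \<in> A \<inter> {m..<m + P} \<Longrightarrow> x mod P \<in> g ` W"
  shows "card (A \<inter> {m..<m + P}) \<le> card W"
proof -
  have "card (A \<inter> {m..<m + P}) \<le> card (g ` W)"
  proof (rule card_inj_on_le)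
    show "inj_on (\<lambda>x. x mod P) (A \<inter> {m..<m + P})"
      using inj_on_mod_interval inj_on_subset by blast
  qed (use assms in auto)
  also have "\<dots> \<le> card W"
    using assms(1) by (rule card_image_le)
  finally show ?thesis .
qed

theorem lemma2p3:
  fixes p q :: nat and \<tau> :: "nat list \<Rightarrow> int"
  assumes "2 \<le> q" and "q < p" and "regular_mapping p q \<tau>"
  shows "\<forall>(m::int) (k::nat). card (Lambda p q \<tau> \<inter> {m ..< m + int p ^ k}) \<le> q ^ k"
proof (intro allI)
  fix m :: int and k :: nat
  define W where "W = {J. set J \<subseteq> {..<q} \<and> length J = k}"
  have "card (Lambda p q \<tau> \<inter> {m ..< m + int p ^ k}) \<le> card W"
  proof (rule card_interval_le_by_residues[where g = "\<lambda>J. prefix_value p \<tau> J mod int p ^ k"])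
    show "finite W"
      unfolding W_def by (rule finite_lists_length_eq) simp
    fix x assume "x \<in> Lambda p q \<tau> \<inter> {m..<m + int p ^ k}"
    then obtain I where I: "I \<in> words q" and x: "x = tau_star p \<tau> I"
      unfolding Lambda_def by auto
    then have "finite {j. 1 \<le> j \<and> \<tau> (pref I j) \<noteq> 0}"
      using assms(3) finite_nonzero_pref unfolding regular_mapping_def by blast
    then have "x mod int p ^ k = prefix_value p \<tau> (pref I k) mod int p ^ k"
      unfolding x by (rule tau_star_mod_power)
    moreover have "pref I k \<in> W"
      unfolding W_def using set_pref_subset[OF I] assms(1) by simp
    ultimately show "x mod int p ^ k \<in> (\<lambda>J. prefix_value p \<tau> J mod int p ^ k) ` W"
      by blast
  qed
  also have "card W = q ^ k"
    unfolding W_def using card_lists_length_eq[of "{..<q}" k] by simp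
  finally show "card (Lambda p q \<tau> \<inter> {m ..< m + int p ^ k}) \<le> q ^ k" .
qed

end
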